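(* Let $g$ be the pp-wave metric $ds^2=H(u,x^1,x^2)\,du^2+2\,du\,dv+(dx^1)^2+(dx^2)^2$ and let $Y$ be a conformal Killing vector field of $g$, $\mathcal L_Yg=2\omega g$, of the form: there exist smooth functions $a(u),a_1(u),a_2(u),\bar b(u)$ and a constant $\mu$ with $$\omega=\bar b(u)+x^ia_i'(u)-\mu v,\qquad Y^u=\tfrac{\mu}{2}\delta_{ij}x^ix^j+a_i(u)x^i+a(u),$$ $$[\mu x^i+a_i(u)]\,\partial_iH=2\mu H+2a_i''(u)x^i-2a''(u)+4\bar b'(u).$$ For a real constant $c$ define the vector field $f$ by $f^u=0$, $$f^v=\tfrac{u}{2}\left(x^ia_i'(u)-a'(u)+2\bar b(u)-2\mu v\right)+\tfrac12x^ia_i(u)+\tfrac{\mu}{4}\delta_{ij}x^ix^j+\tfrac12a(u)-c\,\tfrac{\mu}{4}u^2,\qquad f^i=-\tfrac{u}{2}\left(\mu x^i+a_i(u)\right),$$ and set $\Upsilon=Y+c\,f$. Then $$\mathcal L_\Upsilon g_{\mu\nu}=2\Omega\left(g_{\mu\nu}+c\,K_{\mu\nu}\right),\qquad \Omega=\omega-\tfrac{c}{2}\mu u,\quad K=du\otimes du .$$ Consequently, for the geodesic Lagrangian $L=\frac{1}{2n}\left(H\dot u^2+2\dot u\dot v+(\dot x^1)^2+(\dot x^2)^2\right)-\frac{m^2}{2}n$, along any solution of its Euler–Lagrange equations on which the (always conserved) momentum $p_v=\dot u/n$ takes a constant value $\pi_v\neq0$, the quantity $I=\Upsilon^\mu p_\mu$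 with $c=m^2/\pi_v^2$ is constant.
   Context: Coordinates $(u,v,x^1,x^2)$, indices $i,j=1,2$ are summed with $\delta_{ij}$, $\partial_i=\partial/\partial x^i$, and primes denote $d/du$. $n(\lambda)>0$ is the einbein, dots are $d/d\lambda$, and $p_\mu=\partial L/\partial\dot{\mathrm x}^\mu$. $K=du\otimes du$ equals $\ell\otimes\ell$ with indices lowered, where $\ell=\partial_v$ is the covariantly constant null Killing vector of the pp-wave; thus $K^{\mu\nu}p_\mu p_\nu=p_v^2$. *)

theory Defs
  imports "HOL-Analysis.Analysis"
begin

text \<open>Coordinates on R^4 are indexed by the numeral type 4:
  index 0 = u, 1 = v, 2 = x^1, 3 = x^2. The spacetime is all of R^4.\<close>

definition iu :: 4 where "iu = 0"
definition iv :: 4 where "iv = 1"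
definition ix1 :: 4 where "ix1 = 2"
definition ix2 :: 4 where "ix2 = 3"

definition partial :: "4 \<Rightarrow> (real^4 \<Rightarrow> real) \<Rightarrow> real^4 \<Rightarrow> real" where
  "partial i F p = deriv (\<lambda>t. F (p + t *\<^sub>R axis i 1)) 0"

definition smooth4 :: "(real^4 \<Rightarrow> real) \<Rightarrow> bool" where
  "smooth4 F \<longleftrightarrow> (\<forall>is :: 4 list. \<forall>p. (foldr partial is F) differentiable (at p))"

definition smooth1 :: "(real \<Rightarrow> real) \<Rightarrow> bool" where
  "smooth1 f \<longleftrightarrow> (\<forall>k x. ((deriv ^^ k) f) differentiable (at x))"

definition smooth_vf :: "(real^4 \<Rightarrow> real^4) \<Rightarrow> bool" where
  "smooth_vf Y \<longleftrightarrow> (\<forall>i. smooth4 (\<lambda>p. Y p $ i))"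

definition Hfun :: "(real \<Rightarrow> real \<Rightarrow> real \<Rightarrow> real) \<Rightarrow> real^4 \<Rightarrow> real" where
  "Hfun H p = H (p $ iu) (p $ ix1) (p $ ix2)"

definition ppg :: "(real \<Rightarrow> real \<Rightarrow> real \<Rightarrow> real) \<Rightarrow> real^4 \<Rightarrow> 4 \<Rightarrow> 4 \<Rightarrow> real" where
  "ppg H p i j =
     (if i = iu \<and> j = iu then Hfun H p
      else if (i = iu \<and> j = iv) \<or> (i = iv \<and> j = iu) then 1
      else if (i = ix1 \<and> j = ix1) \<or> (i = ix2 \<and> j = ix2) then 1
      else 0)"

definition Kdu :: "4 \<Rightarrow> 4 \<Rightarrow> real" where
  "Kdu i j = (if i = iu \<and> j = iu then 1 else 0)"

definition lie_deriv :: "(real^4 \<Rightarrow> real^4) \<Rightarrow> (real^4 \<Rightarrow> 4 \<Rightarrow> 4 \<Rightarrow> real) \<Rightarrow> real^4 \<Rightarrow> 4 \<Rightarrow> 4 \<Rightarrow> real" where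
  "lie_deriv Y G p i j =
     (\<Sum>r\<in>UNIV. Y p $ r * partial r (\<lambda>q. G q i j) p)
   + (\<Sum>r\<in>UNIV. G p r j * partial i (\<lambda>q. Y q $ r) p)
   + (\<Sum>r\<in>UNIV. G p i r * partial j (\<lambda>q. Y q $ r) p)"

definition ffield :: "(real \<Rightarrow> real) \<Rightarrow> (real \<Rightarrow> real) \<Rightarrow> (real \<Rightarrow> real) \<Rightarrow> (real \<Rightarrow> real)
    \<Rightarrow> real \<Rightarrow> real \<Rightarrow> real^4 \<Rightarrow> real^4" where
  "ffield a a1 a2 bb \<mu> c p =
     (let u = p $ iu; v = p $ iv; x1 = p $ ix1; x2 = p $ ix2 in
      (\<chi> k. if k = iu then 0
            else if k = iv then
              u / 2 * (x1 * deriv a1 u + x2 * deriv a2 u - deriv a u + 2 * bb u - 2 * \<mu> * v)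
              + 1/2 * (x1 * a1 u + x2 * a2 u) + \<mu> / 4 * (x1\<^sup>2 + x2\<^sup>2) + 1/2 * a u
              - c * \<mu> / 4 * u\<^sup>2
            else if k = ix1 then - u / 2 * (\<mu> * x1 + a1 u)
            else - u / 2 * (\<mu> * x2 + a2 u)))"

definition Lgeo :: "(real \<Rightarrow> real \<Rightarrow> real \<Rightarrow> real) \<Rightarrow> real \<Rightarrow> real^4 \<Rightarrow> real^4 \<Rightarrow> real \<Rightarrow> real" where
  "Lgeo H m x xd n =
     1 / (2 * n) * (Hfun H x * (xd $ iu)\<^sup>2 + 2 * (xd $ iu) * (xd $ iv) + (xd $ ix1)\<^sup>2 + (xd $ ix2)\<^sup>2)
     - m\<^sup>2 / 2 * n"

definition dL_dx :: "(real^4 \<Rightarrow> real^4 \<Rightarrow> real \<Rightarrow> real) \<Rightarrow> 4 \<Rightarrow> real^4 \<Rightarrow> real^4 \<Rightarrow> real \<Rightarrow> real" where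
  "dL_dx L i x xd n = deriv (\<lambda>t. L (x + t *\<^sub>R axis i 1) xd n) 0"

definition dL_dxd :: "(real^4 \<Rightarrow> real^4 \<Rightarrow> real \<Rightarrow> real) \<Rightarrow> 4 \<Rightarrow> real^4 \<Rightarrow> real^4 \<Rightarrow> real \<Rightarrow> real" where
  "dL_dxd L i x xd n = deriv (\<lambda>t. L x (xd + t *\<^sub>R axis i 1) n) 0"

definition dL_dn :: "(real^4 \<Rightarrow> real^4 \<Rightarrow> real \<Rightarrow> real) \<Rightarrow> real^4 \<Rightarrow> real^4 \<Rightarrow> real \<Rightarrow> real" where
  "dL_dn L x xd n = deriv (\<lambda>s. L x xd s) n"

text \<open>(X, n) solves the Euler-Lagrange equations of L, with velocity Xd = dX/d lambda,
  positive einbein n; momenta p_mu = dL/d(xdot^mu).\<close>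
definition EL_solution :: "(real^4 \<Rightarrow> real^4 \<Rightarrow> real \<Rightarrow> real) \<Rightarrow> (real \<Rightarrow> real^4) \<Rightarrow> (real \<Rightarrow> real^4)
    \<Rightarrow> (real \<Rightarrow> real) \<Rightarrow> bool" where
  "EL_solution L X Xd n \<longleftrightarrow>
     (\<forall>t. (X has_vector_derivative Xd t) (at t)) \<and>
     (\<forall>t. n t > 0) \<and>
     (\<forall>i t. ((\<lambda>s. dL_dxd L i (X s) (Xd s) (n s)) has_real_derivative
               dL_dx L i (X t) (Xd t) (n t)) (at t)) \<and>
     (\<forall>t. dL_dn L (X t) (Xd t) (n t) = 0)"

end

theory Submission
  imports Defs
begin

text \<open>The Lie derivative is linear in the vector field, so \<open>\<L>\<^sub>\<Upsilon> g = 2 \<omega> g + c \<L>\<^sub>f g\<close>,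
  and a direct computation, in which the equation for \<open>H\<close> absorbs the \<open>\<partial>\<^sub>i H\<close> terms, gives
  \<open>\<L>\<^sub>f g = 2 \<omega> K - \<mu> u (g + c K)\<close>.
  For the conserved quantity write \<open>w = dx/d\<lambda>\<close>. The Euler-Lagrange equations give the Noether
  identity \<open>d/d\<lambda> (\<Upsilon>\<^sup>\<mu> p\<^sub>\<mu>) = (\<L>\<^sub>\<Upsilon> g)(w, w) / (2n) = \<Omega> (g(w, w) + c (w\<^sup>u)\<^sup>2) / n\<close>.
  The einbein equation is the mass shell \<open>g(w, w) = - m\<^sup>2 n\<^sup>2\<close>, and \<open>w\<^sup>u = \<pi>\<^sub>v n\<close>,
  so the derivative vanishes precisely for \<open>c = m\<^sup>2 / \<pi>\<^sub>v\<^sup>2\<close>.\<close>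

lemma coord_distinct [simp]:
  "iu \<noteq> iv" "iu \<noteq> ix1" "iu \<noteq> ix2" "iv \<noteq> ix1" "iv \<noteq> ix2" "ix1 \<noteq> ix2"
  "iv \<noteq> iu" "ix1 \<noteq> iu" "ix2 \<noteq> iu" "ix1 \<noteq> iv" "ix2 \<noteq> iv" "ix2 \<noteq> ix1"
  by (simp_all add: iu_def iv_def ix1_def ix2_def)

lemma UNIV_4_coords: "(UNIV :: 4 set) = {iu, iv, ix1, ix2}"
  unfolding UNIV_4 iu_def iv_def ix1_def ix2_def by auto

lemma sum_UNIV_4: "sum f (UNIV :: 4 set) = f iu + f iv + f ix1 + f ix2"
  unfolding UNIV_4_coords by (simp add: ac_simps)

lemma all_4: "(\<forall>i :: 4. P i) \<longleftrightarrow> P iu \<and> P iv \<and> P ix1 \<and> P ix2"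
  using UNIV_4_coords by (metis UNIV_I insertE singletonD)

lemma has_derivative_vec_nth [derivative_intros]:
  "((\<lambda>q :: real^'n. q $ i) has_derivative (\<lambda>h. h $ i)) F"
  by (rule bounded_linear_imp_has_derivative) (rule bounded_linear_vec_nth)

lemma partial_has_real_derivative:
  assumes "F differentiable (at p)"
  shows "((\<lambda>t. F (p + t *\<^sub>R axis r 1)) has_real_derivative partial r F p) (at 0)"
proof -
  have "(\<lambda>t :: real. p + t *\<^sub>R axis r (1 :: real)) differentiable (at 0)"
    by (auto intro!: derivative_intros)
  moreover have "F differentiable (at (p + 0 *\<^sub>R axis r 1))"
    using assms by simp
  ultimately have "(\<lambda>t. F (p + t *\<^sub>R axis r 1)) differentiable (at 0)"
    using differentiable_chain_at by (fastforce simp: o_def)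
  then show ?thesis
    unfolding partial_def by (simp add: DERIV_deriv_iff_real_differentiable)
qed

lemma partial_eq_has_derivative:
  assumes "(F has_derivative F') (at p)"
  shows "partial r F p = F' (axis r 1)"
proof -
  have "((\<lambda>t :: real. p + t *\<^sub>R axis r (1 :: real)) has_derivative (\<lambda>t. t *\<^sub>R axis r 1)) (at 0)"
    by (auto intro!: derivative_eq_intros)
  from has_derivative_compose[OF this] assms
  have "((\<lambda>t. F (p + t *\<^sub>R axis r 1)) has_derivative (\<lambda>t. F' (t *\<^sub>R axis r 1))) (at 0)"
    by simp
  moreover have "(\<lambda>t. F' (t *\<^sub>R axis r 1)) = (*) (F' (axis r 1))"
    using has_derivative_bounded_linear[OF assms]
    by (auto simp: fun_eq_iff bounded_linear.linear linear_scale)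
  ultimately show ?thesis
    unfolding partial_def by (simp add: has_field_derivative_def DERIV_imp_deriv)
qed

lemma partial_add_scaled:
  assumes "F differentiable (at p)" "G differentiable (at p)"
  shows "partial r (\<lambda>q. F q + c * G q) p = partial r F p + c * partial r G p"
  unfolding partial_def
  by (intro DERIV_imp_deriv DERIV_add DERIV_cmult partial_has_real_derivative
      [unfolded partial_def] assms)

lemma has_real_derivative_along_curve:
  assumes "(X has_vector_derivative Xd) (at t)" "F differentiable (at (X t))"
  shows "((\<lambda>s. F (X s)) has_real_derivative (\<Sum>r\<in>UNIV. Xd $ r * partial r F (X t))) (at t)"
proof -
  obtain F' where F': "(F has_derivative F') (at (X t))"
    using assms(2) by (auto simp: differentiable_def)
  have lin: "linear F'"
    using has_derivative_bounded_linear[OF F'] bounded_linear.linear by blast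
  have "((\<lambda>s. F (X s)) has_derivative (\<lambda>h. F' (h *\<^sub>R Xd))) (at t)"
    using has_derivative_compose[OF assms(1)[unfolded has_vector_derivative_def] F'] by simp
  moreover have "(\<lambda>h. F' (h *\<^sub>R Xd)) = (*) (F' Xd)"
    by (auto simp: fun_eq_iff linear_scale[OF lin])
  moreover have "F' Xd = F' (\<Sum>r\<in>UNIV. Xd $ r *\<^sub>R axis r 1)"
    using basis_expansion[of Xd] by (simp add: scalar_mult_eq_scaleR)
  ultimately show ?thesis
    by (simp add: has_field_derivative_def linear_sum[OF lin] linear_scale[OF lin]
        partial_eq_has_derivative[OF F'])
qed

lemma smooth4_differentiable: "smooth4 F \<Longrightarrow> F differentiable (at p)"
  unfolding smooth4_def by (metis foldr_Nil id_apply)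

lemma smooth1_has_real_derivative: "smooth1 g \<Longrightarrow> (g has_real_derivative deriv g x) (at x)"
  unfolding smooth1_def by (metis funpow_0 DERIV_deriv_iff_real_differentiable)

lemma smooth1_deriv: "smooth1 g \<Longrightarrow> smooth1 (deriv g)"
  unfolding smooth1_def by (metis funpow_Suc_right comp_apply)

lemma has_derivative_comp_vec_nth:
  "(g has_real_derivative g') (at (p $ i)) \<Longrightarrow>
   ((\<lambda>q :: real^'n. g (q $ i)) has_derivative (\<lambda>h. h $ i * g')) (at p)"
  by (rule DERIV_compose_FDERIV) (auto intro: derivative_intros)

lemma partial_const: "partial r (\<lambda>q. k) p = 0"
  unfolding partial_def by simp

lemma partial_Hfun_v: "partial iv (Hfun H) p = 0"
proof -
  have "(\<lambda>t. Hfun H (p + t *\<^sub>R axis iv 1)) = (\<lambda>t. Hfun H p)"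
    by (simp add: Hfun_def axis_def)
  then show ?thesis
    unfolding partial_def by simp
qed

lemma lie_deriv_add_scaled:
  assumes "\<And>k. (\<lambda>q. Y q $ k) differentiable (at p)" "\<And>k. (\<lambda>q. Z q $ k) differentiable (at p)"
  shows "lie_deriv (\<lambda>q. Y q + c *\<^sub>R Z q) G p i j = lie_deriv Y G p i j + c * lie_deriv Z G p i j"
  using partial_add_scaled[OF assms]
  by (simp add: lie_deriv_def sum.distrib sum_distrib_left algebra_simps)

definition ffield_deriv :: "(real \<Rightarrow> real) \<Rightarrow> (real \<Rightarrow> real) \<Rightarrow> (real \<Rightarrow> real) \<Rightarrow> (real \<Rightarrow> real)
    \<Rightarrow> real \<Rightarrow> real \<Rightarrow> 4 \<Rightarrow> real^4 \<Rightarrow> real^4 \<Rightarrow> real" where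
  "ffield_deriv a a1 a2 bb \<mu> c k p h =
     (let u = p $ iu; v = p $ iv; x1 = p $ ix1; x2 = p $ ix2 in
      if k = iu then 0
      else if k = iv then
        h $ iu / 2 * (x1 * deriv a1 u + x2 * deriv a2 u - deriv a u + 2 * bb u - 2 * \<mu> * v)
        + u / 2 * (h $ ix1 * deriv a1 u + x1 * deriv (deriv a1) u * h $ iu
                   + h $ ix2 * deriv a2 u + x2 * deriv (deriv a2) u * h $ iu
                   - deriv (deriv a) u * h $ iu + 2 * deriv bb u * h $ iu - 2 * \<mu> * h $ iv)
        + 1/2 * (h $ ix1 * a1 u + x1 * deriv a1 u * h $ iu + h $ ix2 * a2 u + x2 * deriv a2 u * h $ iu)
        + \<mu> / 2 * (x1 * h $ ix1 + x2 * h $ ix2) + deriv a u * h $ iu / 2 - c * \<mu> / 2 * u * h $ iu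
      else if k = ix1 then - h $ iu / 2 * (\<mu> * x1 + a1 u) - u / 2 * (\<mu> * h $ ix1 + deriv a1 u * h $ iu)
      else - h $ iu / 2 * (\<mu> * x2 + a2 u) - u / 2 * (\<mu> * h $ ix2 + deriv a2 u * h $ iu))"

lemma has_derivative_ffield:
  assumes "smooth1 a" "smooth1 a1" "smooth1 a2" "smooth1 bb"
  shows "((\<lambda>q. ffield a a1 a2 bb \<mu> c q $ k) has_derivative ffield_deriv a a1 a2 bb \<mu> c k p) (at p)"
proof -
  note coeffs = has_derivative_comp_vec_nth smooth1_has_real_derivative smooth1_deriv assms
  have "\<forall>k. ((\<lambda>q. ffield a a1 a2 bb \<mu> c q $ k) has_derivative ffield_deriv a a1 a2 bb \<mu> c k p) (at p)"
    unfolding all_4 ffield_def ffield_deriv_def Let_def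
    by (simp, intro conjI; rule has_derivative_eq_rhs,
        (auto intro!: derivative_eq_intros coeffs)[1], simp add: fun_eq_iff field_simps power2_eq_square)
  then show ?thesis by blast
qed

lemma lie_deriv_ffield:
  assumes "smooth1 a" "smooth1 a1" "smooth1 a2" "smooth1 bb"
    and \<omega>: "\<omega> = bb (p $ iu) + p $ ix1 * deriv a1 (p $ iu) + p $ ix2 * deriv a2 (p $ iu) - \<mu> * p $ iv"
    and Heq: "(\<mu> * p $ ix1 + a1 (p $ iu)) * partial ix1 (Hfun H) p
                + (\<mu> * p $ ix2 + a2 (p $ iu)) * partial ix2 (Hfun H) p
              = 2 * \<mu> * Hfun H p
                + 2 * (deriv (deriv a1) (p $ iu) * p $ ix1 + deriv (deriv a2) (p $ iu) * p $ ix2)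
                - 2 * deriv (deriv a) (p $ iu) + 4 * deriv bb (p $ iu)"
  shows "lie_deriv (ffield a a1 a2 bb \<mu> c) (ppg H) p i j
    = 2 * \<omega> * Kdu i j - \<mu> * p $ iu * ppg H p i j - c * \<mu> * p $ iu * Kdu i j"
proof -
  have "\<forall>i j. lie_deriv (ffield a a1 a2 bb \<mu> c) (ppg H) p i j
    = 2 * \<omega> * Kdu i j - \<mu> * p $ iu * ppg H p i j - c * \<mu> * p $ iu * Kdu i j"
    unfolding all_4 lie_deriv_def partial_eq_has_derivative[OF has_derivative_ffield[OF assms(1-4)]]
    using Heq \<comment> \<open>it cancels the \<open>\<partial>\<^sub>i H\<close> terms of the \<open>uu\<close> component\<close>
    apply (simp add: \<omega> sum_UNIV_4 ppg_def Kdu_def ffield_deriv_def axis_def partial_const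
        partial_Hfun_v ffield_def Let_def)
    apply (simp add: field_simps)
    apply algebra
    done
  then show ?thesis by blast
qed

lemma dL_dxd_Lgeo:
  assumes "n \<noteq> 0"
  shows "dL_dxd (Lgeo H m) k x xd n = (\<Sum>b\<in>UNIV. ppg H x k b * xd $ b) / n"
proof -
  have "\<forall>k. ((\<lambda>t. Lgeo H m x (xd + t *\<^sub>R axis k 1) n) has_real_derivative
              (\<Sum>b\<in>UNIV. ppg H x k b * xd $ b) / n) (at 0)"
    unfolding all_4 using assms
    apply (simp add: Lgeo_def axis_def sum_UNIV_4 ppg_def)
    apply (intro conjI; rule DERIV_cong; (auto intro!: derivative_eq_intros)?; simp add: field_simps power2_eq_square)
    done
  then show ?thesis
    unfolding dL_dxd_def by (meson DERIV_imp_deriv)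
qed

lemma dL_dx_Lgeo:
  assumes "Hfun H differentiable (at x)" "n \<noteq> 0"
  shows "dL_dx (Lgeo H m) i x xd n = partial i (Hfun H) x * (xd $ iu)\<^sup>2 / (2 * n)"
proof -
  have "((\<lambda>t. Lgeo H m (x + t *\<^sub>R axis i 1) xd n) has_real_derivative
          partial i (Hfun H) x * (xd $ iu)\<^sup>2 / (2 * n)) (at 0)"
    unfolding Lgeo_def
    apply (rule DERIV_cong)
     apply (auto intro!: derivative_eq_intros partial_has_real_derivative assms(1))[1]
    using assms(2) apply (simp_all add: field_simps)
    done
  then show ?thesis
    unfolding dL_dx_def by (meson DERIV_imp_deriv)
qed

lemma dL_dn_Lgeo:
  assumes "n \<noteq> 0"
  shows "dL_dn (Lgeo H m) x xd n
    = - (\<Sum>a\<in>UNIV. \<Sum>b\<in>UNIV. ppg H x a b * xd $ a * xd $ b) / (2 * n\<^sup>2) - m\<^sup>2 / 2"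
proof -
  have "((\<lambda>s. Lgeo H m x xd s) has_real_derivative
          - (\<Sum>a\<in>UNIV. \<Sum>b\<in>UNIV. ppg H x a b * xd $ a * xd $ b) / (2 * n\<^sup>2) - m\<^sup>2 / 2) (at n)"
    unfolding Lgeo_def
    apply (rule DERIV_cong)
     apply (auto intro!: derivative_eq_intros simp: assms)[1]
    using assms apply (simp add: sum_UNIV_4 ppg_def field_simps power2_eq_square)
    done
  then show ?thesis
    unfolding dL_dn_def by (meson DERIV_imp_deriv)
qed

lemma lie_deriv_ppg_quadratic_form:
  assumes "n \<noteq> 0"
  shows "(\<Sum>k\<in>UNIV. (\<Sum>r\<in>UNIV. v $ r * partial r (\<lambda>q. U q $ k) x) * ((\<Sum>b\<in>UNIV. ppg H x k b * v $ b) / n)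
            + partial k (Hfun H) x * (v $ iu)\<^sup>2 / (2 * n) * U x $ k)
       = (\<Sum>a\<in>UNIV. \<Sum>b\<in>UNIV. lie_deriv U (ppg H) x a b * v $ a * v $ b) / (2 * n)"
  using assms
  by (simp add: lie_deriv_def sum_UNIV_4 ppg_def partial_const partial_Hfun_v, simp add: field_simps power2_eq_square)

lemma EL_charge_has_real_derivative:
  assumes EL: "EL_solution (Lgeo H m) X Xd n"
    and H: "\<And>p. Hfun H differentiable (at p)"
    and U: "\<And>k p. (\<lambda>q. U q $ k) differentiable (at p)"
  shows "((\<lambda>s. \<Sum>k\<in>UNIV. U (X s) $ k * dL_dxd (Lgeo H m) k (X s) (Xd s) (n s)) has_real_derivative
           (\<Sum>a\<in>UNIV. \<Sum>b\<in>UNIV. lie_deriv U (ppg H) (X t) a b * Xd t $ a * Xd t $ b) / (2 * n t))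
         (at t)"
proof -
  have X: "(X has_vector_derivative Xd t) (at t)" and n: "n t \<noteq> 0"
    and EL_eq: "\<And>i. ((\<lambda>s. dL_dxd (Lgeo H m) i (X s) (Xd s) (n s)) has_real_derivative
                    dL_dx (Lgeo H m) i (X t) (Xd t) (n t)) (at t)"
    using EL unfolding EL_solution_def by (auto simp: less_imp_neq[symmetric])
  have "((\<lambda>s. \<Sum>k\<in>UNIV. U (X s) $ k * dL_dxd (Lgeo H m) k (X s) (Xd s) (n s)) has_real_derivative
      (\<Sum>k\<in>UNIV. (\<Sum>r\<in>UNIV. Xd t $ r * partial r (\<lambda>q. U q $ k) (X t)) * dL_dxd (Lgeo H m) k (X t) (Xd t) (n t)
          + dL_dx (Lgeo H m) k (X t) (Xd t) (n t) * U (X t) $ k)) (at t)"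
    by (intro DERIV_sum DERIV_mult has_real_derivative_along_curve[OF X] U EL_eq)
  also have "(\<Sum>k\<in>UNIV. (\<Sum>r\<in>UNIV. Xd t $ r * partial r (\<lambda>q. U q $ k) (X t)) * dL_dxd (Lgeo H m) k (X t) (Xd t) (n t)
          + dL_dx (Lgeo H m) k (X t) (Xd t) (n t) * U (X t) $ k)
      = (\<Sum>a\<in>UNIV. \<Sum>b\<in>UNIV. lie_deriv U (ppg H) (X t) a b * Xd t $ a * Xd t $ b) / (2 * n t)"
    unfolding dL_dxd_Lgeo[OF n] dL_dx_Lgeo[OF H n] by (rule lie_deriv_ppg_quadratic_form[OF n])
  finally show ?thesis .
qed

lemma EL_mass_shell:
  assumes "EL_solution (Lgeo H m) X Xd n"
  shows "(\<Sum>a\<in>UNIV. \<Sum>b\<in>UNIV. ppg H (X t) a b * Xd t $ a * Xd t $ b) = - m\<^sup>2 * (n t)\<^sup>2"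
proof -
  have "n t \<noteq> 0" and "dL_dn (Lgeo H m) (X t) (Xd t) (n t) = 0"
    using assms unfolding EL_solution_def by (auto simp: less_imp_neq[symmetric])
  then show ?thesis
    by (simp add: dL_dn_Lgeo field_simps)
qed

lemma conformal_charge_conserved:
  assumes EL: "EL_solution (Lgeo H m) X Xd n"
    and H: "\<And>p. Hfun H differentiable (at p)"
    and U: "\<And>k p. (\<lambda>q. U q $ k) differentiable (at p)"
    and conformal: "\<And>p i j. lie_deriv U (ppg H) p i j = 2 * \<Omega> p * (ppg H p i j + m\<^sup>2 / \<pi>\<^sup>2 * Kdu i j)"
    and p_v: "\<And>t. dL_dxd (Lgeo H m) iv (X t) (Xd t) (n t) = \<pi>" "\<pi> \<noteq> 0"
  shows "(\<Sum>k\<in>UNIV. U (X t1) $ k * dL_dxd (Lgeo H m) k (X t1) (Xd t1) (n t1))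
       = (\<Sum>k\<in>UNIV. U (X t2) $ k * dL_dxd (Lgeo H m) k (X t2) (Xd t2) (n t2))"
proof -
  have "(\<Sum>a\<in>UNIV. \<Sum>b\<in>UNIV. lie_deriv U (ppg H) (X t) a b * Xd t $ a * Xd t $ b) = 0" for t
  proof -
    have n: "n t \<noteq> 0"
      using EL unfolding EL_solution_def by (auto simp: less_imp_neq[symmetric])
    have u: "Xd t $ iu = \<pi> * n t"
      using p_v(1)[of t] n by (simp add: dL_dxd_Lgeo sum_UNIV_4 ppg_def field_simps)
    have "(\<Sum>a\<in>UNIV. \<Sum>b\<in>UNIV. lie_deriv U (ppg H) (X t) a b * Xd t $ a * Xd t $ b)
        = 2 * \<Omega> (X t) * ((\<Sum>a\<in>UNIV. \<Sum>b\<in>UNIV. ppg H (X t) a b * Xd t $ a * Xd t $ b)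
                           + m\<^sup>2 / \<pi>\<^sup>2 * (Xd t $ iu)\<^sup>2)"
      by (simp add: conformal sum_UNIV_4 Kdu_def algebra_simps power2_eq_square)
    also have "\<dots> = 0"
      using p_v(2) by (simp add: EL_mass_shell[OF EL] u power_mult_distrib)
    finally show ?thesis .
  qed
  then show ?thesis
    using EL_charge_has_real_derivative[OF EL H U] DERIV_isconst_all by fastforce
qed

theorem mainTheorem4:
  fixes H :: "real \<Rightarrow> real \<Rightarrow> real \<Rightarrow> real"
    and Y :: "real^4 \<Rightarrow> real^4"
    and a a1 a2 bb :: "real \<Rightarrow> real"
    and \<mu> :: real
    and \<omega> :: "real^4 \<Rightarrow> real"
  assumes smH: "smooth4 (Hfun H)"
    and smY: "smooth_vf Y"
    and sma: "smooth1 a" and sma1: "smooth1 a1" and sma2: "smooth1 a2" and smb: "smooth1 bb"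
    and CKV: "\<forall>p i j. lie_deriv Y (ppg H) p i j = 2 * \<omega> p * ppg H p i j"
    and om: "\<forall>p. \<omega> p = bb (p $ iu) + p $ ix1 * deriv a1 (p $ iu) + p $ ix2 * deriv a2 (p $ iu)
                        - \<mu> * p $ iv"
    and Yu: "\<forall>p. Y p $ iu = \<mu> / 2 * ((p $ ix1)\<^sup>2 + (p $ ix2)\<^sup>2)
                        + a1 (p $ iu) * p $ ix1 + a2 (p $ iu) * p $ ix2 + a (p $ iu)"
    and Heq: "\<forall>p. (\<mu> * p $ ix1 + a1 (p $ iu)) * partial ix1 (Hfun H) p
                 + (\<mu> * p $ ix2 + a2 (p $ iu)) * partial ix2 (Hfun H) p
               = 2 * \<mu> * Hfun H p
                 + 2 * (deriv (deriv a1) (p $ iu) * p $ ix1 + deriv (deriv a2) (p $ iu) * p $ ix2)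
                 - 2 * deriv (deriv a) (p $ iu) + 4 * deriv bb (p $ iu)"
  shows "(\<forall>c p i j.
            lie_deriv (\<lambda>q. Y q + c *\<^sub>R ffield a a1 a2 bb \<mu> c q) (ppg H) p i j
            = 2 * (\<omega> p - c / 2 * \<mu> * p $ iu) * (ppg H p i j + c * Kdu i j))
       \<and> (\<forall>m X Xd n \<pi>v.
            EL_solution (Lgeo H m) X Xd n
            \<and> (\<forall>t. dL_dxd (Lgeo H m) iv (X t) (Xd t) (n t) = \<pi>v) \<and> \<pi>v \<noteq> 0
            \<longrightarrow> (let c = m\<^sup>2 / \<pi>v\<^sup>2;
                     I = (\<lambda>t. \<Sum>k\<in>UNIV. (Y (X t) + c *\<^sub>R ffield a a1 a2 bb \<mu> c (X t)) $ k
                                       * dL_dxd (Lgeo H m) k (X t) (Xd t) (n t))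
                 in \<forall>t1 t2. I t1 = I t2))"
proof -
  have Y: "(\<lambda>q. Y q $ k) differentiable (at p)" for k p
    using smY smooth4_differentiable unfolding smooth_vf_def by blast
  have f: "(\<lambda>q. ffield a a1 a2 bb \<mu> c q $ k) differentiable (at p)" for c k p
    using has_derivative_ffield[OF sma sma1 sma2 smb] by (rule differentiableI)
  have conformal: "lie_deriv (\<lambda>q. Y q + c *\<^sub>R ffield a a1 a2 bb \<mu> c q) (ppg H) p i j
      = 2 * (\<omega> p - c / 2 * \<mu> * p $ iu) * (ppg H p i j + c * Kdu i j)" for c p i j
    unfolding lie_deriv_add_scaled[OF Y f] CKV[rule_format]
      lie_deriv_ffield[OF sma sma1 sma2 smb om[rule_format] Heq[rule_format]]
    by (simp add: algebra_simps)
  have U: "(\<lambda>q. (Y q + c *\<^sub>R ffield a a1 a2 bb \<mu> c q) $ k) differentiable (at p)" for c k p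
    using Y f by (simp add: differentiable_add differentiable_mult)
  show ?thesis
    unfolding Let_def
    using conformal conformal_charge_conserved[OF _ smooth4_differentiable[OF smH] U conformal]
    by simp
qed

end
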